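(* For every integer $\alpha\geq1$ and every $\epsilon\in(0,1)$ there is an uncertain priors coding scheme $(E,D)$ (using a shared uniformly random string $R$) such that for every $P\in\Delta(M)$ the expected code length satisfies \[ \mathbb{E}_{m\sim P,R}\big[|E(m,\alpha,R,P)|\big]\leq H(P)+\log\alpha+\log\tfrac{1}{\epsilon}+1, \] and for every $Q\in\Delta(M)$ satisfying $Q(x)\geq P(x)/\alpha$ for all $x\in M$ (in particular, every $Q$ that is $\alpha$-close to $P$), \[ \Pr_{m\sim P,R}\big[D(E(m,\alpha,R,P),\alpha,R,Q)=m\big]\geq1-\epsilon. \]
   Context: All logarithms are base 2. $M$ is a (finite or countable) message set, $\Delta(M)$ the probability distributions on $M$, and $H(P)=\sum_x P(x)\log\frac{1}{P(x)}$ the entropy. $P,Q$ are $\alpha$-close if $\frac1\alpha Q(x)\leq P(x)\leq\alpha Q(x)$ for all $x$. A coding scheme consists of an encoder $E:M\times\mathbb{N}\times\{0,1\}^{\mathbb{N}}\times\Delta(M)\to\{0,1\}^*$ (message, $\alpha$, shared random string, sender's prior) and a decoder $D:\{0,1\}^*\times\mathbb{N}\times\{0,1\}^{\mathbb{N}}\times\Delta(M)\to M$ (codeword, $\alpha$, shared random string, receiver's prior). *)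

theory Defs
  imports "HOL-Probability.Probability"
begin

definition coin_space :: "(nat \<Rightarrow> bool) measure" where
  "coin_space = PiM UNIV (\<lambda>_::nat. measure_pmf (bernoulli_pmf (1/2)))"

text \<open>Shannon entropy in bits (base-2 logarithm), valued in ennreal so that it may be infinite
  for distributions on a countable message set.\<close>
definition entropy2 :: "'a pmf \<Rightarrow> ennreal" where
  "entropy2 P = (\<integral>\<^sup>+ x. ennreal (pmf P x * log 2 (1 / pmf P x)) \<partial>count_space UNIV)"

end

theory Submission
  imports Defs
begin

text \<open>The shared random string is read as an independent random bit string for every message.
  A message \<open>m\<close> of \<open>P\<close>-probability \<open>p\<close> is sent as the first
  \<open>l = \<lceil>log (\<alpha> / (\<epsilon> p))\<rceil>\<close> bits of its string, which costs at most
  \<open>log (1/p) + log \<alpha> + log (1/\<epsilon>) + 1\<close> bits. The receiver answers with some message \<open>x\<close> such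
  that \<open>Q x \<ge> 2^-l / \<epsilon>\<close> and whose string starts with the received bits. Because
  \<open>Q m \<ge> p / \<alpha> \<ge> 2^-l / \<epsilon>\<close>, \<open>m\<close> is such a candidate; there are at most \<open>\<epsilon> 2^l\<close>
  candidates, and each other one agrees with \<open>m\<close> on \<open>l\<close> bits with probability \<open>2^-l\<close>,
  so decoding fails with probability at most \<open>\<epsilon>\<close>.\<close>

lemma prob_space_coin_space: "prob_space coin_space"
  unfolding coin_space_def by (intro prob_space_PiM prob_space_measure_pmf)

lemma space_coin_space [simp]: "space coin_space = UNIV"
  unfolding coin_space_def by (simp add: space_PiM)

definition coin_cylinder :: "nat set \<Rightarrow> (nat \<Rightarrow> bool) \<Rightarrow> (nat \<Rightarrow> bool) set" where
  "coin_cylinder J f = {r. \<forall>j\<in>J. r j = f j}"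

lemma coin_cylinder_eq_prod_emb:
  "coin_cylinder J f = prod_emb UNIV (\<lambda>_. measure_pmf (bernoulli_pmf (1/2))) J (\<Pi>\<^sub>E j\<in>J. {f j})"
  by (subst prod_emb_PiE)
    (simp_all add: coin_cylinder_def PiE_UNIV_domain Pi_iff set_eq_iff, metis singletonD singletonI)

lemma sets_coin_cylinder: "finite J \<Longrightarrow> coin_cylinder J f \<in> sets coin_space"
  unfolding coin_cylinder_eq_prod_emb coin_space_def by (rule sets_PiM_I) auto

lemma emeasure_coin_cylinder:
  assumes "finite J"
  shows "emeasure coin_space (coin_cylinder J f) = ennreal ((1/2) ^ card J)"
proof -
  have "emeasure coin_space (coin_cylinder J f)
      = (\<Prod>j\<in>J. emeasure (measure_pmf (bernoulli_pmf (1/2))) {f j})"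
    unfolding coin_cylinder_eq_prod_emb coin_space_def
    by (rule emeasure_PiM_emb) (use assms in \<open>auto intro: prob_space_measure_pmf\<close>)
  also have "\<dots> = (\<Prod>j\<in>J. ennreal (1/2))"
    by (intro prod.cong refl) (simp add: emeasure_pmf_single)
  also have "\<dots> = ennreal ((1/2) ^ card J)"
    by (subst prod_ennreal) auto
  finally show ?thesis .
qed

lemma coin_event_in_sets_if_finitely_determined:
  assumes "finite J"
    and determined: "\<And>r r'. (\<And>j. j \<in> J \<Longrightarrow> r j = r' j) \<Longrightarrow> r \<in> X \<Longrightarrow> r' \<in> X"
  shows "X \<in> sets coin_space"
proof -
  have "X = (\<Union>r\<in>X. coin_cylinder J r)"
    using determined unfolding coin_cylinder_def by blast
  also have "\<dots> = (\<Union>f\<in>(\<lambda>r. restrict r J) ` X. coin_cylinder J f)"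
    unfolding coin_cylinder_def by auto
  also have "\<dots> \<in> sets coin_space"
  proof (rule sets.finite_UN)
    have "(\<lambda>r. restrict r J) ` X \<subseteq> (\<Pi>\<^sub>E j\<in>J. UNIV)" by auto
    then show "finite ((\<lambda>r. restrict r J) ` X)"
      by (rule finite_subset) (simp add: assms finite_PiE)
  qed (use assms in \<open>auto intro: sets_coin_cylinder\<close>)
  finally show ?thesis .
qed

definition hash_index :: "'a::countable \<Rightarrow> nat \<Rightarrow> nat" where
  "hash_index x i = prod_encode (to_nat x, i)"

definition coin_hash :: "(nat \<Rightarrow> bool) \<Rightarrow> 'a::countable \<Rightarrow> nat \<Rightarrow> bool list" where
  "coin_hash r x l = map (\<lambda>i. r (hash_index x i)) [0..<l]"

lemma hash_index_eq_iff [simp]: "hash_index x i = hash_index y j \<longleftrightarrow> x = y \<and> i = j"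
  unfolding hash_index_def by simp

lemma snd_prod_decode_hash_index [simp]: "snd (prod_decode (hash_index x i)) = i"
  unfolding hash_index_def by simp

lemma length_coin_hash [simp]: "length (coin_hash r x l) = l"
  unfolding coin_hash_def by simp

lemma coin_hash_eq_iff:
  "coin_hash r x l = coin_hash r' y l \<longleftrightarrow> (\<forall>i<l. r (hash_index x i) = r' (hash_index y i))"
  unfolding coin_hash_def by (simp add: list_eq_iff_nth_eq)

text \<open>A collision is fixed by the common values \<open>g i\<close> of the bits \<open>(x, i)\<close> and \<open>(m, i)\<close>,
  so it is one of \<open>2^l\<close> cylinders on \<open>2 l\<close> coordinates.\<close>
lemma coin_hash_collision_eq_UN_cylinder:
  "{r. coin_hash r x l = coin_hash r m l} =
     (\<Union>g\<in>{..<l} \<rightarrow>\<^sub>E UNIV. coin_cylinder (hash_index x ` {..<l} \<union> hash_index m ` {..<l})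
                                      (\<lambda>j. g (snd (prod_decode j))))"
  (is "?X = (\<Union>g\<in>?G. coin_cylinder ?J (?f g))")
proof (intro equalityI subsetI)
  fix r assume "r \<in> ?X"
  then have "restrict (\<lambda>i. r (hash_index m i)) {..<l} \<in> ?G"
    and "r \<in> coin_cylinder ?J (?f (restrict (\<lambda>i. r (hash_index m i)) {..<l}))"
    by (auto simp: coin_cylinder_def coin_hash_eq_iff)
  then show "r \<in> (\<Union>g\<in>?G. coin_cylinder ?J (?f g))" by blast
next
  fix r assume "r \<in> (\<Union>g\<in>?G. coin_cylinder ?J (?f g))"
  then show "r \<in> ?X" by (auto simp: coin_cylinder_def coin_hash_eq_iff)
qed

lemma sets_coin_hash_collision: "{r. coin_hash r x l = coin_hash r m l} \<in> sets coin_space"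
  unfolding coin_hash_collision_eq_UN_cylinder
  by (intro sets.finite_UN sets_coin_cylinder) (auto simp: finite_PiE)

lemma emeasure_coin_hash_collision:
  assumes "x \<noteq> m"
  shows "emeasure coin_space {r. coin_hash r x l = coin_hash r m l} \<le> ennreal ((1/2) ^ l)"
proof -
  define J where "J = hash_index x ` {..<l} \<union> hash_index m ` {..<l}"
  have "card J = 2 * l"
    unfolding J_def using assms
    by (subst card_Un_disjoint) (auto simp: card_image inj_on_def)
  have "emeasure coin_space {r. coin_hash r x l = coin_hash r m l}
      \<le> (\<Sum>g\<in>{..<l} \<rightarrow>\<^sub>E (UNIV :: bool set).
           emeasure coin_space (coin_cylinder J (\<lambda>j. g (snd (prod_decode j)))))"
    unfolding coin_hash_collision_eq_UN_cylinder J_def[symmetric]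
    by (rule emeasure_subadditive_finite) (auto simp: finite_PiE J_def intro: sets_coin_cylinder)
  also have "\<dots> = ennreal (2 ^ l * (1/2) ^ (2 * l))"
    using \<open>card J = 2 * l\<close>
    by (simp add: emeasure_coin_cylinder J_def card_PiE ennreal_mult ennreal_of_nat_eq_real_of_nat)
  also have "2 ^ l * (1/2) ^ (2 * l) = (1/2 :: real) ^ l"
    by (simp add: power_mult power2_eq_square power_mult_distrib[symmetric])
  finally show ?thesis .
qed

lemma card_pmf_superlevel_le:
  fixes Q :: "'a pmf"
  assumes "finite F" and "\<And>x. x \<in> F \<Longrightarrow> c \<le> pmf Q x"
  shows "real (card F) * c \<le> 1"
proof -
  have "real (card F) * c \<le> sum (pmf Q) F"
    using assms by (intro sum_bounded_below) auto
  also have "\<dots> = measure (measure_pmf Q) F"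
    using assms(1) by (simp add: measure_measure_pmf_finite)
  also have "\<dots> \<le> 1" by (rule measure_pmf.prob_le_1)
  finally show ?thesis .
qed

lemma finite_pmf_superlevel:
  fixes Q :: "'a pmf"
  assumes "c > 0"
  shows "finite {x. c \<le> pmf Q x}"
proof (rule ccontr)
  assume "infinite {x. c \<le> pmf Q x}"
  then obtain F where F: "finite F" "card F = nat \<lceil>1 / c\<rceil> + 1" "F \<subseteq> {x. c \<le> pmf Q x}"
    using infinite_arbitrarily_large by blast
  have "real (card F) * c \<le> 1"
    using F by (intro card_pmf_superlevel_le) auto
  moreover have "1 / c < real (card F)"
    using F(2) by linarith
  ultimately show False
    using assms by (simp add: field_simps)
qed

definition code_length :: "nat \<Rightarrow> real \<Rightarrow> 'a pmf \<Rightarrow> 'a \<Rightarrow> nat" where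
  "code_length \<alpha> \<epsilon> P m = nat \<lceil>log 2 (real \<alpha> / (\<epsilon> * pmf P m))\<rceil>"

definition uncertain_encode ::
    "nat \<Rightarrow> real \<Rightarrow> 'a::countable \<Rightarrow> (nat \<Rightarrow> bool) \<Rightarrow> 'a pmf \<Rightarrow> bool list" where
  "uncertain_encode \<alpha> \<epsilon> m r P = coin_hash r m (code_length \<alpha> \<epsilon> P m)"

definition uncertain_decode :: "real \<Rightarrow> bool list \<Rightarrow> (nat \<Rightarrow> bool) \<Rightarrow> 'a::countable pmf \<Rightarrow> 'a" where
  "uncertain_decode \<epsilon> w r Q =
     (SOME x. (1/2) ^ length w / \<epsilon> \<le> pmf Q x \<and> coin_hash r x (length w) = w)"

lemma uncertain_decode_encode:
  "uncertain_decode \<epsilon> (uncertain_encode \<alpha> \<epsilon> m r P) r Q =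
     (SOME x. (1/2) ^ code_length \<alpha> \<epsilon> P m / \<epsilon> \<le> pmf Q x \<and>
              coin_hash r x (code_length \<alpha> \<epsilon> P m) = coin_hash r m (code_length \<alpha> \<epsilon> P m))"
  unfolding uncertain_decode_def uncertain_encode_def by simp

lemma uncertain_decode_encode_eqI:
  assumes "(1/2) ^ code_length \<alpha> \<epsilon> P m / \<epsilon> \<le> pmf Q m"
    and "\<And>x. x \<noteq> m \<Longrightarrow> (1/2) ^ code_length \<alpha> \<epsilon> P m / \<epsilon> \<le> pmf Q x \<Longrightarrow>
           coin_hash r x (code_length \<alpha> \<epsilon> P m) \<noteq> coin_hash r m (code_length \<alpha> \<epsilon> P m)"
  shows "uncertain_decode \<epsilon> (uncertain_encode \<alpha> \<epsilon> m r P) r Q = m"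
  unfolding uncertain_decode_encode
proof (rule some_equality)
  show "(1/2) ^ code_length \<alpha> \<epsilon> P m / \<epsilon> \<le> pmf Q m \<and>
        coin_hash r m (code_length \<alpha> \<epsilon> P m) = coin_hash r m (code_length \<alpha> \<epsilon> P m)"
    using assms(1) by simp
qed (use assms(2) in blast)

lemma code_length_le:
  assumes "0 < \<epsilon>" "\<epsilon> \<le> 1" "\<alpha> \<ge> 1" "pmf P m > 0"
  shows "real (code_length \<alpha> \<epsilon> P m)
           \<le> log 2 (1 / pmf P m) + (log 2 (real \<alpha>) + log 2 (1 / \<epsilon>) + 1)"
proof -
  define y where "y = real \<alpha> / (\<epsilon> * pmf P m)"
  have "\<epsilon> * pmf P m \<le> 1"
    using assms pmf_le_1[of P m] by (simp add: mult_le_one)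
  then have "1 \<le> y"
    unfolding y_def using assms by (simp add: le_divide_eq)
  then have "0 \<le> log 2 y" by simp
  then have "real (code_length \<alpha> \<epsilon> P m) \<le> log 2 y + 1"
    unfolding code_length_def y_def[symmetric]
    using of_int_ceiling_le_add_one[of "log 2 y"] by simp
  also have "log 2 y = log 2 (1 / pmf P m) + log 2 (real \<alpha>) + log 2 (1 / \<epsilon>)"
    unfolding y_def using assms by (simp add: log_divide log_mult)
  finally show ?thesis by simp
qed

lemma code_length_threshold:
  assumes "0 < \<epsilon>" "\<alpha> \<ge> 1" "pmf P m > 0"
  shows "(1/2) ^ code_length \<alpha> \<epsilon> P m / \<epsilon> \<le> pmf P m / real \<alpha>"
proof -
  define y where "y = real \<alpha> / (\<epsilon> * pmf P m)"
  have "0 < y" unfolding y_def using assms by simp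
  have "log 2 y \<le> real (code_length \<alpha> \<epsilon> P m)"
    unfolding code_length_def y_def[symmetric] by (rule real_nat_ceiling_ge)
  then have "y \<le> 2 ^ code_length \<alpha> \<epsilon> P m"
    using \<open>0 < y\<close> by (simp add: log_le_iff powr_realpow)
  then show ?thesis
    unfolding y_def using assms by (simp add: field_simps power_one_over)
qed

lemma sets_decode_success:
  fixes m :: "'a::countable" and P Q :: "'a pmf"
  assumes "0 < \<epsilon>"
  shows "{r. uncertain_decode \<epsilon> (uncertain_encode \<alpha> \<epsilon> m r P) r Q = m} \<in> sets coin_space"
proof -
  define l where "l = code_length \<alpha> \<epsilon> P m"
  define S where "S = {x. (1/2) ^ l / \<epsilon> \<le> pmf Q x}"
  have "finite S"
    unfolding S_def using assms by (intro finite_pmf_superlevel) simp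
  show ?thesis
  proof (rule coin_event_in_sets_if_finitely_determined)
    show "finite (case_prod hash_index ` (insert m S \<times> {..<l}))"
      using \<open>finite S\<close> by simp
  next
    fix r r' :: "nat \<Rightarrow> bool"
    assume agree: "\<And>j. j \<in> case_prod hash_index ` (insert m S \<times> {..<l}) \<Longrightarrow> r j = r' j"
    have hash_agree: "coin_hash r x l = coin_hash r' x l" if "x \<in> insert m S" for x
      unfolding coin_hash_def
      by (intro map_cong refl agree image_eqI[of _ _ "(x, _)"]) (use that in auto)
    have "(\<lambda>x. x \<in> S \<and> coin_hash r x l = coin_hash r m l) =
          (\<lambda>x. x \<in> S \<and> coin_hash r' x l = coin_hash r' m l)"
    proof
      fix x show "(x \<in> S \<and> coin_hash r x l = coin_hash r m l) =
                  (x \<in> S \<and> coin_hash r' x l = coin_hash r' m l)"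
        using hash_agree[OF insertI2, of x] hash_agree[OF insertI1] by (cases "x \<in> S") simp_all
    qed
    moreover assume "r \<in> {r. uncertain_decode \<epsilon> (uncertain_encode \<alpha> \<epsilon> m r P) r Q = m}"
    ultimately show "r' \<in> {r. uncertain_decode \<epsilon> (uncertain_encode \<alpha> \<epsilon> m r P) r Q = m}"
      by (simp add: uncertain_decode_encode l_def[symmetric] S_def)
  qed
qed

lemma emeasure_decode_success_ge:
  fixes m :: "'a::countable" and P Q :: "'a pmf"
  assumes "0 < \<epsilon>" "\<alpha> \<ge> 1" "pmf P m > 0" "pmf P m / real \<alpha> \<le> pmf Q m"
  shows "emeasure coin_space {r. uncertain_decode \<epsilon> (uncertain_encode \<alpha> \<epsilon> m r P) r Q = m}
           \<ge> ennreal (1 - \<epsilon>)"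
proof -
  interpret coin: prob_space coin_space by (rule prob_space_coin_space)
  define l where "l = code_length \<alpha> \<epsilon> P m"
  define c where "c = (1/2 :: real) ^ l / \<epsilon>"
  define S where "S = {x. c \<le> pmf Q x}"
  define collide where "collide x = {r. coin_hash r x l = coin_hash r m l}" for x :: 'a
  define U where "U = (\<Union>x\<in>S - {m}. collide x)"
  have "0 < c" unfolding c_def using assms by simp
  then have "finite S" and "real (card S) * c \<le> 1"
    unfolding S_def by (auto intro: finite_pmf_superlevel card_pmf_superlevel_le)
  have "c \<le> pmf Q m"
    using code_length_threshold[OF assms(1-3)] assms(4) unfolding c_def l_def by linarith
  have collide_sets: "collide x \<in> sets coin_space" for x
    unfolding collide_def by (rule sets_coin_hash_collision)
  have "measure coin_space (collide x) \<le> (1/2) ^ l" if "x \<noteq> m" for x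
    using emeasure_coin_hash_collision[OF that, of l]
    unfolding collide_def coin.emeasure_eq_measure by simp
  then have "measure coin_space U \<le> (\<Sum>x\<in>S - {m}. (1/2) ^ l)"
    unfolding U_def using \<open>finite S\<close> collide_sets
    by (intro order.trans[OF coin.finite_measure_subadditive_finite] sum_mono) auto
  also have "\<dots> \<le> real (card S) * (1/2) ^ l"
    using \<open>finite S\<close> by (simp add: card_Diff_subset_Int)
  also have "\<dots> = real (card S) * c * \<epsilon>"
    unfolding c_def using assms by simp
  also have "\<dots> \<le> \<epsilon>"
    using \<open>real (card S) * c \<le> 1\<close> assms by (simp add: mult_le_cancel_right1)
  finally have "measure coin_space U \<le> \<epsilon>" .
  have decode_correct:
    "UNIV - U \<subseteq> {r. uncertain_decode \<epsilon> (uncertain_encode \<alpha> \<epsilon> m r P) r Q = m}"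
    using \<open>c \<le> pmf Q m\<close>
    by (auto simp: U_def S_def collide_def c_def l_def intro: uncertain_decode_encode_eqI)
  have "ennreal (1 - \<epsilon>) \<le> ennreal (1 - measure coin_space U)"
    using \<open>measure coin_space U \<le> \<epsilon>\<close> by (intro ennreal_leI) linarith
  also have "\<dots> = emeasure coin_space (UNIV - U)"
    using coin.prob_compl[of U] collide_sets \<open>finite S\<close>
    by (simp add: coin.emeasure_eq_measure U_def)
  also have "\<dots> \<le> emeasure coin_space
                     {r. uncertain_decode \<epsilon> (uncertain_encode \<alpha> \<epsilon> m r P) r Q = m}"
    by (rule emeasure_mono[OF decode_correct sets_decode_success[OF assms(1)]])
  finally show ?thesis .
qed

lemma expected_code_length_le:
  fixes P :: "'a::countable pmf"
  assumes "0 < \<epsilon>" "\<epsilon> \<le> 1" "\<alpha> \<ge> 1"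
  shows "(\<integral>\<^sup>+ (m, r). ennreal (real (length (uncertain_encode \<alpha> \<epsilon> m r P)))
           \<partial>(measure_pmf P \<Otimes>\<^sub>M coin_space))
         \<le> entropy2 P + ennreal (log 2 (real \<alpha>) + log 2 (1 / \<epsilon>) + 1)"
proof -
  interpret coin: prob_space coin_space by (rule prob_space_coin_space)
  define K where "K = log 2 (real \<alpha>) + log 2 (1 / \<epsilon>) + 1"
  have "0 \<le> K" unfolding K_def using assms by simp
  have length_measurable:
    "(\<lambda>x. ennreal (real (code_length \<alpha> \<epsilon> P (fst x))))
       \<in> borel_measurable (measure_pmf P \<Otimes>\<^sub>M coin_space)"
    by (rule measurable_compose[OF measurable_fst]) simp
  have "(\<integral>\<^sup>+ (m, r). ennreal (real (length (uncertain_encode \<alpha> \<epsilon> m r P)))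
           \<partial>(measure_pmf P \<Otimes>\<^sub>M coin_space))
      = (\<integral>\<^sup>+ m. ennreal (real (code_length \<alpha> \<epsilon> P m)) \<partial>measure_pmf P)"
    unfolding uncertain_encode_def length_coin_hash case_prod_beta'
    using coin.emeasure_space_1
    by (simp add: coin.nn_integral_fst[OF length_measurable, symmetric])
  also have "\<dots> \<le> (\<integral>\<^sup>+ m. ennreal (log 2 (1 / pmf P m)) + ennreal K \<partial>measure_pmf P)"
  proof (rule nn_integral_mono_AE, unfold AE_measure_pmf_iff, intro ballI)
    fix m assume "m \<in> set_pmf P"
    then have "0 < pmf P m" by (simp add: pmf_positive)
    then have "0 \<le> log 2 (1 / pmf P m)"
      using pmf_le_1[of P m] by simp
    moreover have "real (code_length \<alpha> \<epsilon> P m) \<le> log 2 (1 / pmf P m) + K"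
      unfolding K_def using assms \<open>0 < pmf P m\<close> by (rule code_length_le)
    ultimately show "ennreal (real (code_length \<alpha> \<epsilon> P m))
                       \<le> ennreal (log 2 (1 / pmf P m)) + ennreal K"
      using \<open>0 \<le> K\<close> by (simp add: ennreal_leI flip: ennreal_plus)
  qed
  also have "\<dots> = (\<integral>\<^sup>+ m. ennreal (log 2 (1 / pmf P m)) \<partial>measure_pmf P) + ennreal K"
    by (subst nn_integral_add) (auto simp: measure_pmf.emeasure_space_1)
  also have "(\<integral>\<^sup>+ m. ennreal (log 2 (1 / pmf P m)) \<partial>measure_pmf P) = entropy2 P"
    unfolding entropy2_def nn_integral_measure_pmf
    by (rule nn_integral_cong) (simp add: ennreal_mult'[OF pmf_nonneg])
  finally show ?thesis unfolding K_def .
qed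

lemma sets_pair_decode_success:
  fixes P Q :: "'a::countable pmf"
  assumes "0 < \<epsilon>"
  shows "{(m, r). uncertain_decode \<epsilon> (uncertain_encode \<alpha> \<epsilon> m r P) r Q = m}
           \<in> sets (measure_pmf P \<Otimes>\<^sub>M coin_space)"
proof -
  have "{(m, r). uncertain_decode \<epsilon> (uncertain_encode \<alpha> \<epsilon> m r P) r Q = m}
      = (\<Union>m. {m} \<times> {r. uncertain_decode \<epsilon> (uncertain_encode \<alpha> \<epsilon> m r P) r Q = m})"
    by auto
  also have "\<dots> \<in> sets (measure_pmf P \<Otimes>\<^sub>M coin_space)"
    using sets_decode_success[OF assms]
    by (intro sets.countable_UN') (auto intro!: pair_measureI)
  finally show ?thesis .
qed

lemma emeasure_pair_decode_success_ge:
  fixes P Q :: "'a::countable pmf"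
  assumes "0 < \<epsilon>" "\<alpha> \<ge> 1" "\<And>x. pmf P x / real \<alpha> \<le> pmf Q x"
  shows "emeasure (measure_pmf P \<Otimes>\<^sub>M coin_space)
           {(m, r). uncertain_decode \<epsilon> (uncertain_encode \<alpha> \<epsilon> m r P) r Q = m}
         \<ge> ennreal (1 - \<epsilon>)"
proof -
  interpret coin: prob_space coin_space by (rule prob_space_coin_space)
  have "ennreal (1 - \<epsilon>) = (\<integral>\<^sup>+ m. ennreal (1 - \<epsilon>) \<partial>measure_pmf P)"
    by (simp add: measure_pmf.emeasure_space_1)
  also have "\<dots> \<le> (\<integral>\<^sup>+ m. emeasure coin_space
                    {r. uncertain_decode \<epsilon> (uncertain_encode \<alpha> \<epsilon> m r P) r Q = m} \<partial>measure_pmf P)"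
    using assms
    by (intro nn_integral_mono_AE)
      (auto simp: AE_measure_pmf_iff pmf_positive intro: emeasure_decode_success_ge)
  also have "\<dots> = emeasure (measure_pmf P \<Otimes>\<^sub>M coin_space)
                    {(m, r). uncertain_decode \<epsilon> (uncertain_encode \<alpha> \<epsilon> m r P) r Q = m}"
    by (subst coin.emeasure_pair_measure_alt[OF sets_pair_decode_success[OF assms(1)]])
      (auto intro!: nn_integral_cong arg_cong[where f = "emeasure coin_space"])
  finally show ?thesis .
qed

theorem theorem3:
  fixes \<alpha> :: nat and \<epsilon> :: real
  assumes "\<alpha> \<ge> 1" and "0 < \<epsilon>" and "\<epsilon> < 1"
  shows "\<exists>(E :: 'a::countable \<Rightarrow> nat \<Rightarrow> (nat \<Rightarrow> bool) \<Rightarrow> 'a pmf \<Rightarrow> bool list)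
            (D :: bool list \<Rightarrow> nat \<Rightarrow> (nat \<Rightarrow> bool) \<Rightarrow> 'a pmf \<Rightarrow> 'a).
          \<forall>P :: 'a pmf.
            (\<lambda>(m, r). real (length (E m \<alpha> r P)))
               \<in> borel_measurable (measure_pmf P \<Otimes>\<^sub>M coin_space)
          \<and> (\<integral>\<^sup>+ (m, r). ennreal (real (length (E m \<alpha> r P))) \<partial>(measure_pmf P \<Otimes>\<^sub>M coin_space))
               \<le> entropy2 P + ennreal (log 2 (real \<alpha>) + log 2 (1 / \<epsilon>) + 1)
          \<and> (\<forall>Q :: 'a pmf. (\<forall>x. pmf Q x \<ge> pmf P x / real \<alpha>) \<longrightarrow>
               {(m, r). D (E m \<alpha> r P) \<alpha> r Q = m} \<in> sets (measure_pmf P \<Otimes>\<^sub>M coin_space)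
             \<and> emeasure (measure_pmf P \<Otimes>\<^sub>M coin_space) {(m, r). D (E m \<alpha> r P) \<alpha> r Q = m}
                 \<ge> ennreal (1 - \<epsilon>))"
proof (intro exI[of _ "\<lambda>m a r P. uncertain_encode a \<epsilon> m r P"]
             exI[of _ "\<lambda>w a r Q. uncertain_decode \<epsilon> w r Q"] allI conjI impI)
  fix P Q :: "'a pmf"
  show "(\<lambda>(m, r). real (length (uncertain_encode \<alpha> \<epsilon> m r P)))
          \<in> borel_measurable (measure_pmf P \<Otimes>\<^sub>M coin_space)"
    unfolding uncertain_encode_def
    by (auto simp: case_prod_beta' intro: measurable_compose[OF measurable_fst])
  show "(\<integral>\<^sup>+ (m, r). ennreal (real (length (uncertain_encode \<alpha> \<epsilon> m r P)))
          \<partial>(measure_pmf P \<Otimes>\<^sub>M coin_space))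
        \<le> entropy2 P + ennreal (log 2 (real \<alpha>) + log 2 (1 / \<epsilon>) + 1)"
    using assms by (intro expected_code_length_le) auto
  show "{(m, r). uncertain_decode \<epsilon> (uncertain_encode \<alpha> \<epsilon> m r P) r Q = m}
          \<in> sets (measure_pmf P \<Otimes>\<^sub>M coin_space)"
    using assms by (intro sets_pair_decode_success) auto
  assume "\<forall>x. pmf P x / real \<alpha> \<le> pmf Q x"
  then show "emeasure (measure_pmf P \<Otimes>\<^sub>M coin_space)
               {(m, r). uncertain_decode \<epsilon> (uncertain_encode \<alpha> \<epsilon> m r P) r Q = m}
             \<ge> ennreal (1 - \<epsilon>)"
    using assms by (intro emeasure_pair_decode_success_ge) auto
qed

end
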